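(* The bracket on $\mathbb{R}^2$ determined by \[ \{\Omega_1,\Omega_2\} := -\frac{I_{13}\Omega_1 + I_{23}\Omega_2 + B_3}{I_{11} I_{22}} \] coincides with the reduced nonholonomic bracket $\{\cdot,\cdot\}_{\widehat{\mathcal{D}^*}}$ on $\widehat{\mathcal{D}^*}=\mathcal{D}^*/SO(3)\cong\mathbb{R}^2$, expressed in the coordinates $(\Omega_1,\Omega_2)$.
   Context: Suslov problem with a gyrostat: configuration space $Q=SO(3)$, with $\Omega=(\Omega_1,\Omega_2,\Omega_3)$ the body angular velocity. The Lagrangian is $L=\frac12(\mathbb{I}\Omega)\cdot\Omega + B\cdot\Omega$, where $B=(B_1,B_2,B_3)\in\mathbb{R}^3$ is the constant angular momentum of the gyrostat and the inertia tensor is \[ \mathbb{I}=\begin{pmatrix} I_{11} & 0 & I_{13}\\ 0 & I_{22} & I_{23}\\ I_{13} & I_{23} & I_{33}\end{pmatrix}. \] The kinetic term defines a Riemannian metric $g$ on $Q$ and the linear term defines a gyroscopic 1-form $\eta$. The nonholonomic constraint $\Omega_3=0$ defines a left-invariant, non-integrable rank-2 distribution $\mathcal{D}\subset TQ$. Using $g$, $\mathcal{D}^*$ is identified with the annihilator of $\mathcal{D}^\perp$ in $T^*Q$, $\eta=\eta^\parallel+\eta^\perp$ is decomposed accordingly, $i_\mathcal{D}^*:T^*Q\to\mathcal{D}^*$ is the projection, $\mathcal{P}^*:\mathcal{D}^*\hookrightarrow T^*Q$ the inclusion, and $\tau_{\mathcal{D}^*}:\mathcal{D}^*\to Q$ the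 bundle projection. The nonholonomic bracket on $\mathcal{D}^*$ is $\{\varphi,\psi\}_{\mathcal{D}^*}:=\{\varphi\circ i_\mathcal{D}^*,\psi\circ i_\mathcal{D}^*\}\circ(\mathcal{P}^*+\eta^\perp\circ\tau_{\mathcal{D}^*})$, with $\{\cdot,\cdot\}$ the canonical Poisson bracket on $T^*Q$. $SO(3)$ acts on $Q$ by left multiplication, preserving $L$ and $\mathcal{D}$; the bracket is invariant and descends to a reduced bracket $\{\cdot,\cdot\}_{\widehat{\mathcal{D}^*}}$ on $\widehat{\mathcal{D}^*}=\mathcal{D}^*/SO(3)\cong\mathbb{R}^2$. If $p_1,p_2$ are the quasi-momenta associated with a left-invariant adapted frame, then on the constraint space $\Omega_1=(p_1-B_1)/I_{11}$, $\Omega_2=(p_2-B_2)/I_{22}$, so $(\Omega_1,\Omega_2)$ serve as coordinates on $\widehat{\mathcal{D}^*}$. The reduced equations are $\dot\Omega_1=-\frac{1}{I_{11}}(I_{13}\Omega_1+I_{23}\Omega_2+B_3)\Omega_2$, $\dot\Omega_2=\frac{1}{I_{22}}(I_{13}\Omega_1+I_{23}\Omega_2+B_3)\Omega_1$, Hamiltonian with respect to this bracket and $H=\frac12(I_{11}\Omega_1^2+I_{22}\Omega_2^2)$. *)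

theory Defs
  imports "HOL-Analysis.Analysis" "HOL-Analysis.Cross3"
begin

text \<open>Suslov problem with a gyrostat, in the left trivialization of T SO(3) and T* SO(3):
  body angular velocities and body momenta are elements of real^3.\<close>

definition inertia :: "real \<Rightarrow> real \<Rightarrow> real \<Rightarrow> real \<Rightarrow> real \<Rightarrow> real^3^3" where
  "inertia I11 I22 I33 I13 I23 =
     vector [vector [I11, 0, I13], vector [0, I22, I23], vector [I13, I23, I33]]"

definition grad3 :: "(real^3 \<Rightarrow> real) \<Rightarrow> real^3 \<Rightarrow> real^3" where
  "grad3 F M = (\<chi> i. frechet_derivative F (at M) (axis i 1))"

text \<open>Canonical Poisson bracket of SO(3)-invariant (under left multiplication) functions on
  T* SO(3), written in terms of the body momentum M (minus Lie--Poisson bracket on so(3)*).\<close>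
definition can_bracket :: "(real^3 \<Rightarrow> real) \<Rightarrow> (real^3 \<Rightarrow> real) \<Rightarrow> real^3 \<Rightarrow> real" where
  "can_bracket F G M = - (M \<bullet> cross3 (grad3 F M) (grad3 G M))"

definition distD :: "(real^3) set" where
  "distD = {v. v $ 3 = 0}"

definition Dperp :: "real^3^3 \<Rightarrow> (real^3) set" where
  "Dperp II = {v. \<forall>w\<in>distD. w \<bullet> (II *v v) = 0}"

definition annih :: "(real^3) set \<Rightarrow> (real^3) set" where
  "annih S = {\<mu>. \<forall>v\<in>S. \<mu> \<bullet> v = 0}"

text \<open>D* identified with the annihilator of D-perp.\<close>
definition Dstar :: "real^3^3 \<Rightarrow> (real^3) set" where
  "Dstar II = annih (Dperp II)"

definition iD :: "real^3^3 \<Rightarrow> real^3 \<Rightarrow> real^3" where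
  "iD II \<mu> = (THE \<nu>. \<nu> \<in> Dstar II \<and> \<mu> - \<nu> \<in> annih distD)"

text \<open>Perpendicular part of the gyroscopic 1-form eta = B . Omega.\<close>
definition eta_perp :: "real^3^3 \<Rightarrow> real^3 \<Rightarrow> real^3" where
  "eta_perp II B = B - iD II B"

definition nh_bracket :: "real^3^3 \<Rightarrow> real^3 \<Rightarrow> (real^3 \<Rightarrow> real) \<Rightarrow> (real^3 \<Rightarrow> real) \<Rightarrow> real^3 \<Rightarrow> real" where
  "nh_bracket II B \<phi> \<psi> \<mu> = can_bracket (\<phi> \<circ> iD II) (\<psi> \<circ> iD II) (\<mu> + eta_perp II B)"

text \<open>Coordinates (Omega_1, Omega_2) on D*/SO(3): quasi-momenta p_i = mu(e_i), Omega_i = (p_i - B_i)/I_ii.\<close>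
definition omega_coords :: "real \<Rightarrow> real \<Rightarrow> real^3 \<Rightarrow> real^3 \<Rightarrow> real \<times> real" where
  "omega_coords I11 I22 B \<mu> = ((\<mu> $ 1 - B $ 1) / I11, (\<mu> $ 2 - B $ 2) / I22)"

definition reduced_bracket ::
  "real \<Rightarrow> real \<Rightarrow> real \<Rightarrow> real \<Rightarrow> real \<Rightarrow> real^3 \<Rightarrow>
   (real \<times> real \<Rightarrow> real) \<Rightarrow> (real \<times> real \<Rightarrow> real) \<Rightarrow> real \<times> real \<Rightarrow> real" where
  "reduced_bracket I11 I22 I33 I13 I23 B \<phi> \<psi> w =
     (let II = inertia I11 I22 I33 I13 I23;
          \<mu> = (THE \<mu>. \<mu> \<in> Dstar II \<and> omega_coords I11 I22 B \<mu> = w)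
      in nh_bracket II B (\<phi> \<circ> omega_coords I11 I22 B) (\<psi> \<circ> omega_coords I11 I22 B) \<mu>)"

definition pd1 :: "(real \<times> real \<Rightarrow> real) \<Rightarrow> real \<times> real \<Rightarrow> real" where
  "pd1 f w = frechet_derivative f (at w) (1, 0)"

definition pd2 :: "(real \<times> real \<Rightarrow> real) \<Rightarrow> real \<times> real \<Rightarrow> real" where
  "pd2 f w = frechet_derivative f (at w) (0, 1)"

end

theory Submission
  imports Defs
begin

text \<open>Everything is explicit in body coordinates. \<open>D*\<close> is the plane
  \<open>\<mu>$3 = I13 \<mu>$1 / I11 + I23 \<mu>$2 / I22\<close>, and the projection \<open>iD\<close> keeps \<open>\<mu>$1, \<mu>$2\<close>
  and moves \<open>\<mu>$3\<close> onto that plane. Functions of \<open>(\<Omega>1, \<Omega>2)\<close> depend only on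
  \<open>\<mu>$1, \<mu>$2\<close>, so their gradients have no third component and the Lie--Poisson bracket
  at \<open>M\<close> is \<open>-M$3\<close> times the planar Jacobian, the chain rule contributing
  \<open>1 / (I11 I22)\<close>. Shifting the point of \<open>D*\<close> over \<open>(\<Omega>1, \<Omega>2)\<close> by \<open>\<eta>\<^sup>\<bottom>\<close> makes its
  third component \<open>I13 \<Omega>1 + I23 \<Omega>2 + B$3\<close>, the factor in the reduced bracket.\<close>

lemma vec3_eq_iff: "(v::'a^3) = w \<longleftrightarrow> v$1 = w$1 \<and> v$2 = w$2 \<and> v$3 = w$3"
  by (simp add: vec_eq_iff forall_3)

lemma inner_vec3: "(v::real^3) \<bullet> w = v$1 * w$1 + v$2 * w$2 + v$3 * w$3"
  by (simp add: inner_vec_def sum_3)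

lemma inertia_mult_vec_nth:
  "(inertia I11 I22 I33 I13 I23 *v v) $ 1 = I11 * v$1 + I13 * v$3"
  "(inertia I11 I22 I33 I13 I23 *v v) $ 2 = I22 * v$2 + I23 * v$3"
  "(inertia I11 I22 I33 I13 I23 *v v) $ 3 = I13 * v$1 + I23 * v$2 + I33 * v$3"
  by (simp_all add: inertia_def matrix_vector_mult_def sum_3)

lemma inertia_diag_pos:
  assumes "\<And>v. v \<noteq> 0 \<Longrightarrow> v \<bullet> (inertia I11 I22 I33 I13 I23 *v v) > 0"
  shows "I11 > 0" "I22 > 0"
proof -
  have "axis 1 1 \<bullet> (inertia I11 I22 I33 I13 I23 *v axis 1 1) > 0"
    "axis 2 1 \<bullet> (inertia I11 I22 I33 I13 I23 *v axis 2 1) > 0"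
    by (auto intro: assms simp: axis_eq_0_iff)
  then show "I11 > 0" "I22 > 0"
    by (simp_all add: inner_vec3 inertia_mult_vec_nth axis_def)
qed

lemma annih_distD: "annih distD = {\<mu>. \<mu>$1 = 0 \<and> \<mu>$2 = 0}"
proof -
  have "(\<forall>v\<in>distD. \<mu> \<bullet> v = 0) \<longleftrightarrow> \<mu>$1 = 0 \<and> \<mu>$2 = 0" for \<mu> :: "real^3"
  proof
    assume "\<forall>v\<in>distD. \<mu> \<bullet> v = 0"
    then have "\<mu> \<bullet> axis 1 1 = 0" "\<mu> \<bullet> axis 2 1 = 0"
      by (auto simp: distD_def axis_def)
    then show "\<mu>$1 = 0 \<and> \<mu>$2 = 0"
      by (simp_all add: inner_vec3 axis_def)
  qed (simp add: distD_def inner_vec3)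
  then show ?thesis
    by (auto simp: annih_def)
qed

lemma Dperp_inertia:
  "Dperp (inertia I11 I22 I33 I13 I23) =
     {v. I11 * v$1 + I13 * v$3 = 0 \<and> I22 * v$2 + I23 * v$3 = 0}"
proof -
  let ?II = "inertia I11 I22 I33 I13 I23"
  have "(\<forall>w\<in>distD. w \<bullet> (?II *v v) = 0) \<longleftrightarrow> ?II *v v \<in> annih distD" for v
    by (simp add: annih_def inner_commute)
  then show ?thesis
    by (simp add: Dperp_def annih_distD inertia_mult_vec_nth)
qed

lemma Dstar_inertia_iff:
  assumes "I11 \<noteq> 0" "I22 \<noteq> 0"
  shows "\<mu> \<in> Dstar (inertia I11 I22 I33 I13 I23) \<longleftrightarrow>
         \<mu>$3 = I13 * \<mu>$1 / I11 + I23 * \<mu>$2 / I22"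
proof -
  let ?d = "vector [- I13 / I11, - I23 / I22, 1] :: real^3"
  have Dperp_eq: "Dperp (inertia I11 I22 I33 I13 I23) = range (\<lambda>t. t *\<^sub>R ?d)"
  proof (intro set_eqI iffI)
    fix v assume "v \<in> Dperp (inertia I11 I22 I33 I13 I23)"
    then have "v = v$3 *\<^sub>R ?d"
      using assms by (simp add: Dperp_inertia vec3_eq_iff field_simps)
    then show "v \<in> range (\<lambda>t. t *\<^sub>R ?d)" by blast
  qed (use assms in \<open>auto simp: Dperp_inertia\<close>)
  have "\<mu> \<in> Dstar (inertia I11 I22 I33 I13 I23) \<longleftrightarrow> \<mu> \<bullet> ?d = 0"
    by (auto simp: Dstar_def annih_def Dperp_eq)
  also have "\<dots> \<longleftrightarrow> \<mu>$3 = I13 * \<mu>$1 / I11 + I23 * \<mu>$2 / I22"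
    by (auto simp: inner_vec3 algebra_simps)
  finally show ?thesis .
qed

lemma iD_inertia:
  assumes "I11 \<noteq> 0" "I22 \<noteq> 0"
  shows "iD (inertia I11 I22 I33 I13 I23) m =
         vector [m$1, m$2, I13 * m$1 / I11 + I23 * m$2 / I22]"
  unfolding iD_def
  by (rule the_equality)
     (use assms in \<open>simp_all add: Dstar_inertia_iff annih_distD vec3_eq_iff\<close>)

lemma the_Dstar_omega_coords:
  assumes "I11 \<noteq> 0" "I22 \<noteq> 0"
  shows "(THE \<mu>. \<mu> \<in> Dstar (inertia I11 I22 I33 I13 I23) \<and> omega_coords I11 I22 B \<mu> = (x, y)) =
         vector [I11 * x + B$1, I22 * y + B$2, I13 * x + I23 * y + I13 * B$1 / I11 + I23 * B$2 / I22]"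
  by (rule the_equality)
     (use assms in \<open>auto simp: Dstar_inertia_iff omega_coords_def vec3_eq_iff field_simps\<close>)

lemma omega_coords_has_derivative:
  "(omega_coords I11 I22 B has_derivative (\<lambda>h. (h$1 / I11, h$2 / I22))) (at m)"
  unfolding omega_coords_def divide_inverse
  by (auto intro!: derivative_eq_intros bounded_linear.has_derivative[OF bounded_linear_vec_nth])

lemma omega_coords_comp_iD:
  assumes "I11 \<noteq> 0" "I22 \<noteq> 0"
  shows "omega_coords I11 I22 B \<circ> iD (inertia I11 I22 I33 I13 I23) = omega_coords I11 I22 B"
  using assms by (simp add: fun_eq_iff iD_inertia omega_coords_def)

lemma grad3_comp_omega_coords:
  assumes "g differentiable (at (omega_coords I11 I22 B M))"
  shows "grad3 (g \<circ> omega_coords I11 I22 B) M $ 1 = pd1 g (omega_coords I11 I22 B M) / I11"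
    and "grad3 (g \<circ> omega_coords I11 I22 B) M $ 2 = pd2 g (omega_coords I11 I22 B M) / I22"
    and "grad3 (g \<circ> omega_coords I11 I22 B) M $ 3 = 0"
proof -
  let ?g' = "frechet_derivative g (at (omega_coords I11 I22 B M))"
  have g': "(g has_derivative ?g') (at (omega_coords I11 I22 B M))"
    using assms frechet_derivative_works by blast
  then have "linear ?g'"
    using has_derivative_linear by blast
  then interpret g': linear ?g' .
  have "(g \<circ> omega_coords I11 I22 B has_derivative ?g' \<circ> (\<lambda>h. (h$1 / I11, h$2 / I22))) (at M)"
    using omega_coords_has_derivative g' by (rule diff_chain_at)
  then have "frechet_derivative (g \<circ> omega_coords I11 I22 B) (at M) =
             ?g' \<circ> (\<lambda>h. (h$1 / I11, h$2 / I22))"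
    by (simp add: frechet_derivative_at[symmetric])
  then have grad: "grad3 (g \<circ> omega_coords I11 I22 B) M $ i =
                   ?g' ((axis i 1 :: real^3) $ 1 / I11, (axis i 1 :: real^3) $ 2 / I22)" for i
    by (simp add: grad3_def)
  show "grad3 (g \<circ> omega_coords I11 I22 B) M $ 1 = pd1 g (omega_coords I11 I22 B M) / I11"
    and "grad3 (g \<circ> omega_coords I11 I22 B) M $ 2 = pd2 g (omega_coords I11 I22 B M) / I22"
    using g'.scale[of "1 / I11" "(1, 0)"] g'.scale[of "1 / I22" "(0, 1)"]
    by (simp_all add: grad axis_def pd1_def pd2_def)
  show "grad3 (g \<circ> omega_coords I11 I22 B) M $ 3 = 0"
    using g'.zero by (simp add: grad axis_def zero_prod_def)
qed

lemma can_bracket_planar: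
  assumes "grad3 F M $ 3 = 0" "grad3 G M $ 3 = 0"
  shows "can_bracket F G M =
         - M$3 * (grad3 F M $ 1 * grad3 G M $ 2 - grad3 F M $ 2 * grad3 G M $ 1)"
  using assms by (simp add: can_bracket_def inner_vec3 cross3_simps algebra_simps)

theorem theorem6p1:
  fixes I11 I22 I33 I13 I23 :: real and B :: "real^3"
    and \<phi> \<psi> :: "real \<times> real \<Rightarrow> real"
  assumes posdef: "\<And>v. v \<noteq> 0 \<Longrightarrow> v \<bullet> (inertia I11 I22 I33 I13 I23 *v v) > 0"
    and diff_phi: "\<And>w. \<phi> differentiable (at w)"
    and diff_psi: "\<And>w. \<psi> differentiable (at w)"
  shows "reduced_bracket I11 I22 I33 I13 I23 B \<phi> \<psi> (x, y) =
         - (I13 * x + I23 * y + B $ 3) / (I11 * I22)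
           * (pd1 \<phi> (x, y) * pd2 \<psi> (x, y) - pd2 \<phi> (x, y) * pd1 \<psi> (x, y))"
proof -
  let ?II = "inertia I11 I22 I33 I13 I23"
  let ?oc = "omega_coords I11 I22 B"
  have I11: "I11 \<noteq> 0" and I22: "I22 \<noteq> 0"
    using inertia_diag_pos[OF posdef] by simp_all
  define M where "M = (THE \<mu>. \<mu> \<in> Dstar ?II \<and> ?oc \<mu> = (x, y)) + eta_perp ?II B"
  have M: "M$1 = I11 * x + B$1" "M$2 = I22 * y + B$2" "M$3 = I13 * x + I23 * y + B$3"
    using I11 I22 by (simp_all add: M_def the_Dstar_omega_coords eta_perp_def iD_inertia)
  then have oc_M: "?oc M = (x, y)"
    using I11 I22 by (simp add: omega_coords_def)
  have "reduced_bracket I11 I22 I33 I13 I23 B \<phi> \<psi> (x, y) = can_bracket (\<phi> \<circ> ?oc) (\<psi> \<circ> ?oc) M"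
    using I11 I22
    by (simp add: reduced_bracket_def nh_bracket_def M_def comp_assoc omega_coords_comp_iD Let_def)
  also have "\<dots> = - (I13 * x + I23 * y + B $ 3) / (I11 * I22)
           * (pd1 \<phi> (x, y) * pd2 \<psi> (x, y) - pd2 \<phi> (x, y) * pd1 \<psi> (x, y))"
    using I11 I22 diff_phi diff_psi
    by (simp add: can_bracket_planar grad3_comp_omega_coords oc_M M field_simps)
  finally show ?thesis .
qed

end
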